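(* Fix a field $\mathbb{F}$ and let $X$ be a regular $n$-dimensional CW complex. Then the matroid $M_n^{\mathbb{F}}(X)$ is $k$-connected if and only if for every integer $l$ with $1 \le l < k$ and every partition $X_n = E_1 \cup E_2$ into disjoint subsets with $|E_1|, |E_2| \ge l$, one has $\nu_{n-1}(E_1,E_2) \ge l$.
   Context: A CW complex $X$ is regular if it is compact (finitely many cells), all attaching maps are embeddings, and any two $k$-cells share at most one $(k-1)$-dimensional face. $X$ is $n$-dimensional if it has no cells of dimension greater than $n$ and the union of its $n$-cells is an open dense subset of $X$. $X_k$ is the set of $k$-cells. For $E \subseteq X_n$, $\overline{E}$ is the point-set closure in $X$ of the union of the cells in $E$. $M_n^{\mathbb{F}}(X)$ is the linear matroid over $\mathbb{F}$ on ground set $X_n$ represented by the columns of the matrix of the cellular boundary operator $\partial_n^{\mathbb{F}}$, with rank function $r$. $\nu_{n-1}(E_1,E_2)$ is the dimension of the kernel of the map $\tilde H_{n-1}(\overline{E_1}\cap\overline{E_2};\mathbb{F}) \to \tilde H_{n-1}(\overline{E_1};\mathbb{F}) \oplus \tilde H_{n-1}(\overline{E_2};\mathbb{F})$ induced by inclusions (reduced homology). A $k$-separation of a matroid $M$ on ground set $E$ is a partition of $E$ into disjoint $E_1, E_2$ with $|E_1|, |E_2| \ge k$ and $r(E_1) + r(E_2) \le r(M) + k - 1$; $M$ is $k$-connected if it has no $l$-separation for any $1 \le l < k$. *)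

theory Defs
  imports Complex_Main "HOL-Library.Function_Algebras"
begin

text \<open>Combinatorial (cellular) model of a finite regular CW complex over a field 'f.
  Cells form a finite set C of type 'c; dimension function cdim; the cellular
  boundary operator is given by incidence numbers inc b a (coefficient of the
  cell a in the boundary of the cell b).\<close>

definition scaleF :: "'f::field \<Rightarrow> ('c \<Rightarrow> 'f) \<Rightarrow> ('c \<Rightarrow> 'f)" where
  "scaleF c v = (\<lambda>x. c * v x)"

definition fdim :: "('c \<Rightarrow> 'f::field) set \<Rightarrow> nat" where
  "fdim S = vector_space.dim scaleF S"

definition facet :: "'c set \<Rightarrow> ('c \<Rightarrow> nat) \<Rightarrow> ('c \<Rightarrow> 'c \<Rightarrow> 'f::field) \<Rightarrow> 'c \<Rightarrow> 'c \<Rightarrow> bool" where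
  "facet C cdim inc b a \<longleftrightarrow> a \<in> C \<and> b \<in> C \<and> cdim a + 1 = cdim b \<and> inc b a \<noteq> 0"

text \<open>face a b: the cell a lies in the closure of the cell b.\<close>
definition face :: "'c set \<Rightarrow> ('c \<Rightarrow> nat) \<Rightarrow> ('c \<Rightarrow> 'c \<Rightarrow> 'f::field) \<Rightarrow> 'c \<Rightarrow> 'c \<Rightarrow> bool" where
  "face C cdim inc a b \<longleftrightarrow> b \<in> C \<and> (\<lambda>y x. facet C cdim inc x y)\<^sup>*\<^sup>* a b"

definition cl :: "'c set \<Rightarrow> ('c \<Rightarrow> nat) \<Rightarrow> ('c \<Rightarrow> 'c \<Rightarrow> 'f::field) \<Rightarrow> 'c set \<Rightarrow> 'c set" where
  "cl C cdim inc E = {a \<in> C. \<exists>b\<in>E. face C cdim inc a b}"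

definition chains :: "('c \<Rightarrow> nat) \<Rightarrow> 'c set \<Rightarrow> nat \<Rightarrow> ('c \<Rightarrow> 'f::field) set" where
  "chains cdim S k = {v. \<forall>x. v x \<noteq> 0 \<longrightarrow> x \<in> S \<and> cdim x = k}"

definition bd :: "'c set \<Rightarrow> ('c \<Rightarrow> 'c \<Rightarrow> 'f::field) \<Rightarrow> ('c \<Rightarrow> 'f) \<Rightarrow> ('c \<Rightarrow> 'f)" where
  "bd C inc v = (\<lambda>a. \<Sum>b\<in>C. v b * inc b a)"

definition aug :: "'c set \<Rightarrow> ('c \<Rightarrow> 'f::field) \<Rightarrow> 'f" where
  "aug C v = (\<Sum>x\<in>C. v x)"

definition rcycles :: "'c set \<Rightarrow> ('c \<Rightarrow> nat) \<Rightarrow> ('c \<Rightarrow> 'c \<Rightarrow> 'f::field) \<Rightarrow> 'c set \<Rightarrow> nat \<Rightarrow> ('c \<Rightarrow> 'f) set" where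
  "rcycles C cdim inc S k = {v \<in> chains cdim S k. bd C inc v = (\<lambda>_. 0) \<and> (k = 0 \<longrightarrow> aug C v = 0)}"

definition bdries :: "'c set \<Rightarrow> ('c \<Rightarrow> nat) \<Rightarrow> ('c \<Rightarrow> 'c \<Rightarrow> 'f::field) \<Rightarrow> 'c set \<Rightarrow> nat \<Rightarrow> ('c \<Rightarrow> 'f) set" where
  "bdries C cdim inc S k = bd C inc ` chains cdim S (Suc k)"

definition rhdim :: "'c set \<Rightarrow> ('c \<Rightarrow> nat) \<Rightarrow> ('c \<Rightarrow> 'c \<Rightarrow> 'f::field) \<Rightarrow> 'c set \<Rightarrow> nat \<Rightarrow> nat" where
  "rhdim C cdim inc S k = fdim (rcycles C cdim inc S k) - fdim (bdries C cdim inc S k)"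

definition regular_cw :: "'c set \<Rightarrow> ('c \<Rightarrow> nat) \<Rightarrow> ('c \<Rightarrow> 'c \<Rightarrow> 'f::field) \<Rightarrow> nat \<Rightarrow> bool" where
  "regular_cw C cdim inc n \<longleftrightarrow>
     finite C
   \<and> (\<forall>a b. inc b a \<noteq> 0 \<longrightarrow> a \<in> C \<and> b \<in> C \<and> cdim a + 1 = cdim b)
   \<and> (\<forall>a b. inc b a \<in> {-1, 0, 1})
   \<and> (\<forall>b c. (\<Sum>a\<in>C. inc b a * inc a c) = 0)
   \<and> (\<forall>e\<in>C. cdim e = 1 \<longrightarrow> card {a. inc e a \<noteq> 0} = 2 \<and> (\<Sum>a\<in>C. inc e a) = 0)
   \<and> (\<forall>b\<in>C. 1 \<le> cdim b \<longrightarrow> (\<forall>j. rhdim C cdim inc {a. face C cdim inc a b \<and> a \<noteq> b} j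
                                  = (if j + 1 = cdim b then 1 else 0)))
   \<and> (\<forall>b\<in>C. \<forall>b'\<in>C. b \<noteq> b' \<longrightarrow> card {a. facet C cdim inc b a \<and> facet C cdim inc b' a} \<le> 1)
   \<and> (\<forall>c\<in>C. cdim c \<le> n)
   \<and> (\<forall>c\<in>C. \<exists>b\<in>C. cdim b = n \<and> face C cdim inc c b)"

definition ncells :: "'c set \<Rightarrow> ('c \<Rightarrow> nat) \<Rightarrow> nat \<Rightarrow> 'c set" where
  "ncells C cdim k = {c \<in> C. cdim c = k}"

text \<open>Rank function of the matroid M_n^F(X): rank of the set of columns of the
  matrix of the boundary operator indexed by E.\<close>
definition mrank :: "('c \<Rightarrow> 'c \<Rightarrow> 'f::field) \<Rightarrow> 'c set \<Rightarrow> nat" where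
  "mrank inc E = fdim ((\<lambda>b a. inc b a) ` E)"

definition k_separation :: "('e set \<Rightarrow> nat) \<Rightarrow> 'e set \<Rightarrow> nat \<Rightarrow> 'e set \<Rightarrow> 'e set \<Rightarrow> bool" where
  "k_separation r E k E1 E2 \<longleftrightarrow> E1 \<union> E2 = E \<and> E1 \<inter> E2 = {} \<and> card E1 \<ge> k \<and> card E2 \<ge> k
     \<and> int (r E1) + int (r E2) \<le> int (r E) + int k - 1"

definition k_connected :: "('e set \<Rightarrow> nat) \<Rightarrow> 'e set \<Rightarrow> nat \<Rightarrow> bool" where
  "k_connected r E k \<longleftrightarrow> (\<forall>l. 1 \<le> l \<and> l < k \<longrightarrow> \<not> (\<exists>E1 E2. k_separation r E l E1 E2))"

text \<open>nu_{m}(E1,E2): dimension of the kernel of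
  H~_m(cl E1 \<inter> cl E2) -> H~_m(cl E1) \<oplus> H~_m(cl E2),
  i.e. dim {reduced m-cycles of the intersection that bound in both} - dim B_m(intersection).\<close>
definition nu :: "'c set \<Rightarrow> ('c \<Rightarrow> nat) \<Rightarrow> ('c \<Rightarrow> 'c \<Rightarrow> 'f::field) \<Rightarrow> nat \<Rightarrow> 'c set \<Rightarrow> 'c set \<Rightarrow> nat" where
  "nu C cdim inc m E1 E2 =
     (let A = cl C cdim inc E1; B = cl C cdim inc E2; I = A \<inter> B in
      fdim {z \<in> rcycles C cdim inc I m. z \<in> bdries C cdim inc A m \<and> z \<in> bdries C cdim inc B m}
      - fdim (bdries C cdim inc I m))"

end

theory Submission
  imports Defs "HOL-Library.Indicator_Function"
begin

(* Since the n-chains of cl E_i are exactly the chains supported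
   on E_i, the (n-1)-boundaries of cl E_i form the span of the columns of the boundary matrix indexed
   by E_i, whose dimension is r(E_i).  The intersection cl E1 \<inter> cl E2 contains no n-cells, hence has
   no (n-1)-boundaries, and every boundary is a reduced cycle; so nu_{n-1}(E1,E2) is the dimension of
   the intersection of the two column spaces.  Grassmann's formula then gives
   r(E1) + r(E2) = r(X_n) + nu_{n-1}(E1,E2), so a partition is an l-separation exactly when
   nu_{n-1}(E1,E2) < l. *)

context vector_space
begin

lemma independent_Un_of_span_Int:
  assumes "independent C" "independent D" "finite D"
    and "span C \<inter> span D \<subseteq> span (C \<inter> D)"
  shows "independent (C \<union> D)"
proof -
  have "independent (C \<union> D')" if "finite D'" "D' \<subseteq> D - C" for D'
    using that
  proof (induction D')
    case empty
    then show ?case using assms(1) by simp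
  next
    case (insert d D')
    have "d \<notin> span (C \<union> D')"
    proof
      assume "d \<in> span (C \<union> D')"
      then obtain c e where de: "d = c + e" "c \<in> span C" "e \<in> span D'"
        by (auto simp: span_Un)
      have "D' \<subseteq> D" "d \<in> D" "d \<notin> C" "d \<notin> D'" using insert by auto
      have "c = d - e" using de(1) by simp
      then have "c \<in> span D"
        using de(3) span_mono[of D' D] \<open>D' \<subseteq> D\<close> \<open>d \<in> D\<close> by (auto intro: span_diff span_base)
      then have "c \<in> span (D - {d})"
        using de(2) assms(4) span_mono[of "C \<inter> D" "D - {d}"] \<open>d \<notin> C\<close> by blast
      moreover have "e \<in> span (D - {d})"
        using de(3) span_mono[of D' "D - {d}"] \<open>D' \<subseteq> D\<close> \<open>d \<notin> D'\<close> by blast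
      ultimately have "d \<in> span (D - {d})"
        using de(1) by (simp add: span_add)
      then show False
        using assms(2) \<open>d \<in> D\<close> by (auto simp: dependent_def)
    qed
    then show ?case
      using insert by (simp add: independent_insertI)
  qed
  from this[of "D - C"] show ?thesis using assms(3) by simp
qed

lemma dim_Un_add_dim_Int_span:
  assumes "finite U" "finite W"
  shows "dim (U \<union> W) + dim (span U \<inter> span W) = dim U + dim W"
proof -
  obtain B where B: "B \<subseteq> span U \<inter> span W" "independent B" "span U \<inter> span W \<subseteq> span B"
    by (rule basis_exists[of "span U \<inter> span W"]) auto
  obtain C where C: "B \<subseteq> C" "C \<subseteq> span U" "independent C" "span U \<subseteq> span C"
    using maximal_independent_subset_extend[of B "span U"] B(1,2) by auto
  obtain D where D: "B \<subseteq> D" "D \<subseteq> span W" "independent D" "span W \<subseteq> span D"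
    using maximal_independent_subset_extend[of B "span W"] B(1,2) by auto
  have fin: "finite C" "finite D"
    using independent_span_bound[OF assms(1) C(3,2)] independent_span_bound[OF assms(2) D(3,2)]
    by simp_all
  have span_C: "span C = span U" and span_D: "span D = span W"
    using span_mono[OF C(2)] C(4) span_mono[OF D(2)] D(4) by (simp_all add: span_span)
  have "span U \<inter> span W \<subseteq> span (C \<inter> D)"
    using B(3) C(1) D(1) span_mono[of B "C \<inter> D"] by blast
  then have CD: "independent (C \<union> D)"
    using independent_Un_of_span_Int[OF C(3) D(3) fin(2)] span_C span_D by simp
  have "dim (U \<union> W) = card (C \<union> D)"
    by (rule dim_eq_card[OF _ CD]) (simp add: span_Un span_C span_D)
  moreover have "dim (span U \<inter> span W) = card (C \<inter> D)"
    using C D \<open>span U \<inter> span W \<subseteq> span (C \<inter> D)\<close>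
    by (intro dim_unique[OF _ _ independent_mono[OF C(3)]]) auto
  moreover have "dim U = card C" "dim W = card D"
    using dim_eq_card[OF span_C C(3)] dim_eq_card[OF span_D D(3)] by simp_all
  ultimately show ?thesis
    using card_Un_Int[OF fin] by simp
qed

end

lemma vector_space_scaleF: "vector_space (scaleF :: 'f::field \<Rightarrow> ('c \<Rightarrow> 'f) \<Rightarrow> ('c \<Rightarrow> 'f))"
  by unfold_locales (simp_all add: scaleF_def fun_eq_iff distrib_left distrib_right)

interpretation vs: vector_space "scaleF :: 'f::field \<Rightarrow> ('c \<Rightarrow> 'f) \<Rightarrow> ('c \<Rightarrow> 'f)"
  by (rule vector_space_scaleF)

lemma fdim_singleton_zero: "fdim ({0} :: ('c \<Rightarrow> 'f::field) set) = 0"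
  using vs.dim_span_eq_card_independent[OF vs.independent_empty]
  by (simp add: fdim_def)

lemma sum_fun_apply: "sum f A x = (\<Sum>a\<in>A. f a x)"
  by (induction A rule: infinite_finite_induct) auto

lemma span_indicators_eq_supported:
  assumes "finite E"
  shows "vs.span ((\<lambda>b. indicator {b}) ` E) = {v :: 'c \<Rightarrow> 'f::field. \<forall>x. v x \<noteq> 0 \<longrightarrow> x \<in> E}"
    (is "?span = ?supported")
proof
  show "?span \<subseteq> ?supported"
    by (rule vs.span_minimal) (auto simp: vs.subspace_def scaleF_def indicator_def, metis add.right_neutral)
  show "?supported \<subseteq> ?span"
  proof
    fix v assume v: "v \<in> ?supported"
    have "(\<Sum>b\<in>E. scaleF (v b) (indicator {b})) x = v x" for x
      using v assms by (cases "x \<in> E") (auto simp: sum_fun_apply scaleF_def indicator_def)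
    then have "v = (\<Sum>b\<in>E. scaleF (v b) (indicator {b}))"
      by auto
    also have "\<dots> \<in> ?span"
      by (intro vs.span_sum vs.span_scale vs.span_base) auto
    finally show "v \<in> ?span" .
  qed
qed

lemma face_eq_or_dim_less:
  assumes "face C cdim inc a b"
  shows "a = b \<or> cdim a < cdim b"
proof -
  have "(\<lambda>y x. facet C cdim inc x y)\<^sup>*\<^sup>* a b" using assms by (simp add: face_def)
  then show ?thesis
    by (induction rule: rtranclp_induct) (auto simp: facet_def)
qed

lemma cl_facet_closed:
  assumes "b \<in> cl C cdim inc E" "facet C cdim inc b a"
  shows "a \<in> cl C cdim inc E"
  using assms by (auto simp: cl_def face_def facet_def intro: converse_rtranclp_into_rtranclp)

lemma cl_top_cells:
  assumes "E \<subseteq> ncells C cdim n" "a \<in> cl C cdim inc E" "cdim a = n"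
  shows "a \<in> E"
  using assms face_eq_or_dim_less[of C cdim inc a] by (fastforce simp: cl_def ncells_def)

lemma chains_cl_top:
  assumes "E \<subseteq> ncells C cdim n"
  shows "chains cdim (cl C cdim inc E) n = {v. \<forall>x. v x \<noteq> 0 \<longrightarrow> x \<in> E}"
proof -
  have "a \<in> cl C cdim inc E \<and> cdim a = n \<longleftrightarrow> a \<in> E" for a
    using assms cl_top_cells[OF assms, of a] by (auto simp: ncells_def cl_def face_def)
  then show ?thesis by (auto simp: chains_def)
qed

lemma rcycles_Int:
  "rcycles C cdim inc (S \<inter> T) k = rcycles C cdim inc S k \<inter> rcycles C cdim inc T k"
  by (auto simp: rcycles_def chains_def)

lemma module_hom_bd: "module_hom scaleF scaleF (bd C inc)"
  unfolding module_hom_iff_linear Vector_Spaces.linear_iff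
  by (simp add: vector_space_scaleF bd_def scaleF_def fun_eq_iff distrib_right sum.distrib
      sum_distrib_left mult.assoc)

(* Of the axioms of a regular CW complex the argument needs only these algebraic ones. *)
locale augmented_cell_complex =
  fixes C :: "'c set" and cdim :: "'c \<Rightarrow> nat" and inc :: "'c \<Rightarrow> 'c \<Rightarrow> 'f::field"
  assumes finite_cells: "finite C"
    and inc_nonzero: "inc b a \<noteq> 0 \<Longrightarrow> a \<in> C \<and> b \<in> C \<and> cdim a + 1 = cdim b"
    and inc_inc: "(\<Sum>a\<in>C. inc b a * inc a c) = 0"
    and inc_edge: "e \<in> C \<Longrightarrow> cdim e = 1 \<Longrightarrow> (\<Sum>a\<in>C. inc e a) = 0"
begin

lemma bd_bd: "bd C inc (bd C inc v) = (\<lambda>_. 0)"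
proof
  fix c
  have "bd C inc (bd C inc v) c = (\<Sum>a\<in>C. \<Sum>b\<in>C. v b * inc b a * inc a c)"
    by (simp add: bd_def sum_distrib_right)
  also have "\<dots> = (\<Sum>b\<in>C. v b * (\<Sum>a\<in>C. inc b a * inc a c))"
    by (subst sum.swap) (simp add: sum_distrib_left mult.assoc)
  finally show "bd C inc (bd C inc v) c = 0"
    by (simp add: inc_inc)
qed

lemma aug_bd:
  assumes "v \<in> chains cdim S 1"
  shows "aug C (bd C inc v) = 0"
proof -
  have "aug C (bd C inc v) = (\<Sum>b\<in>C. v b * (\<Sum>a\<in>C. inc b a))"
    unfolding aug_def bd_def by (subst sum.swap) (simp add: sum_distrib_left)
  also have "\<dots> = 0"
    using assms by (intro sum.neutral) (auto simp: chains_def inc_edge)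
  finally show ?thesis .
qed

lemma bd_chains_cl:
  assumes "v \<in> chains cdim (cl C cdim inc E) (Suc k)"
  shows "bd C inc v \<in> chains cdim (cl C cdim inc E) k"
  unfolding chains_def
proof (intro CollectI allI impI)
  fix a assume "bd C inc v a \<noteq> 0"
  then obtain b where "b \<in> C" "v b * inc b a \<noteq> 0"
    unfolding bd_def by (rule sum.not_neutral_contains_not_neutral)
  then have b: "b \<in> cl C cdim inc E" "cdim b = Suc k" "facet C cdim inc b a"
    using assms inc_nonzero[of b a] by (auto simp: chains_def facet_def)
  then show "a \<in> cl C cdim inc E \<and> cdim a = k"
    using cl_facet_closed[OF b(1,3)] by (simp add: facet_def)
qed

lemma bdries_cl_subset_rcycles:
  "bdries C cdim inc (cl C cdim inc E) k \<subseteq> rcycles C cdim inc (cl C cdim inc E) k"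
  using bd_chains_cl aug_bd bd_bd by (auto simp: bdries_def rcycles_def)

lemma bd_indicator: "b \<in> C \<Longrightarrow> bd C inc (indicator {b}) = inc b"
  using finite_cells by (simp add: bd_def indicator_def fun_eq_iff)

lemma bdries_cl_top:
  assumes "E \<subseteq> ncells C cdim (Suc k)"
  shows "bdries C cdim inc (cl C cdim inc E) k = vs.span (inc ` E)"
proof -
  have "E \<subseteq> C" using assms by (auto simp: ncells_def)
  then have "finite E" using finite_cells finite_subset by blast
  have "bdries C cdim inc (cl C cdim inc E) k = bd C inc ` vs.span ((\<lambda>b. indicator {b}) ` E)"
    by (simp add: bdries_def chains_cl_top[OF assms] span_indicators_eq_supported[OF \<open>finite E\<close>])
  also have "\<dots> = vs.span (bd C inc ` (\<lambda>b. indicator {b}) ` E)"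
    by (rule module_hom.span_image[OF module_hom_bd, symmetric])
  also have "bd C inc ` (\<lambda>b. indicator {b}) ` E = inc ` E"
    using \<open>E \<subseteq> C\<close> bd_indicator by (force simp: image_image)
  finally show ?thesis .
qed

lemma nu_top_eq_dim_Int:
  assumes "E1 \<subseteq> ncells C cdim (Suc k)" "E2 \<subseteq> ncells C cdim (Suc k)" "E1 \<inter> E2 = {}"
  shows "nu C cdim inc k E1 E2 = fdim (vs.span (inc ` E1) \<inter> vs.span (inc ` E2))"
proof -
  let ?A = "cl C cdim inc E1" and ?B = "cl C cdim inc E2"
  have "a \<notin> ?A \<inter> ?B" if "cdim a = Suc k" for a
    using that cl_top_cells[OF assms(1)] cl_top_cells[OF assms(2)] assms(3) by blast
  then have no_chains: "chains cdim (?A \<inter> ?B) (Suc k) = {\<lambda>_. 0}"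
    by (auto simp: chains_def fun_eq_iff)
  have "bdries C cdim inc (?A \<inter> ?B) k = {0}"
    unfolding bdries_def no_chains by (simp add: bd_def zero_fun_def)
  moreover have "{z \<in> rcycles C cdim inc (?A \<inter> ?B) k.
      z \<in> bdries C cdim inc ?A k \<and> z \<in> bdries C cdim inc ?B k}
    = bdries C cdim inc ?A k \<inter> bdries C cdim inc ?B k"
    using bdries_cl_subset_rcycles[of E1 k] bdries_cl_subset_rcycles[of E2 k] rcycles_Int by blast
  ultimately show ?thesis
    by (simp add: nu_def Let_def fdim_singleton_zero bdries_cl_top assms(1,2))
qed

lemma mrank_add_mrank_eq:
  assumes "E1 \<union> E2 = ncells C cdim (Suc k)" "E1 \<inter> E2 = {}"
  shows "mrank inc E1 + mrank inc E2 = mrank inc (ncells C cdim (Suc k)) + nu C cdim inc k E1 E2"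
proof -
  have "finite (ncells C cdim (Suc k))"
    using finite_cells by (simp add: ncells_def)
  then have "finite (inc ` E1)" "finite (inc ` E2)"
    using assms(1) by (metis finite_Un finite_imageI)+
  moreover have "nu C cdim inc k E1 E2 = vs.dim (vs.span (inc ` E1) \<inter> vs.span (inc ` E2))"
    using nu_top_eq_dim_Int[of E1 k E2] assms by (auto simp: fdim_def)
  ultimately show ?thesis
    using vs.dim_Un_add_dim_Int_span[of "inc ` E1" "inc ` E2"]
    unfolding mrank_def fdim_def assms(1)[symmetric] image_Un by linarith
qed

end

lemma regular_cw_imp_augmented_cell_complex:
  "regular_cw C cdim inc n \<Longrightarrow> augmented_cell_complex C cdim inc"
  by (auto simp: regular_cw_def augmented_cell_complex_def)

lemma k_separation_iff_conn_less:
  assumes "\<And>E1 E2. E1 \<union> E2 = E \<Longrightarrow> E1 \<inter> E2 = {} \<Longrightarrow> r E1 + r E2 = r E + conn E1 E2"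
  shows "k_separation r E l E1 E2 \<longleftrightarrow>
    E1 \<union> E2 = E \<and> E1 \<inter> E2 = {} \<and> l \<le> card E1 \<and> l \<le> card E2 \<and> conn E1 E2 < l"
proof (cases "E1 \<union> E2 = E \<and> E1 \<inter> E2 = {}")
  case True
  then have "int (r E1) + int (r E2) = int (r E) + int (conn E1 E2)"
    using assms[of E1 E2] by simp
  then show ?thesis
    unfolding k_separation_def by linarith
qed (auto simp: k_separation_def)

lemma k_connected_iff_conn_ge:
  assumes "\<And>E1 E2. E1 \<union> E2 = E \<Longrightarrow> E1 \<inter> E2 = {} \<Longrightarrow> r E1 + r E2 = r E + conn E1 E2"
  shows "k_connected r E k \<longleftrightarrow> (\<forall>l. 1 \<le> l \<and> l < k \<longrightarrow>
    (\<forall>E1 E2. E1 \<union> E2 = E \<and> E1 \<inter> E2 = {} \<and> card E1 \<ge> l \<and> card E2 \<ge> l \<longrightarrow> conn E1 E2 \<ge> l))"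
proof -
  have "\<And>l E1 E2. k_separation r E l E1 E2 \<longleftrightarrow>
    E1 \<union> E2 = E \<and> E1 \<inter> E2 = {} \<and> l \<le> card E1 \<and> l \<le> card E2 \<and> conn E1 E2 < l"
    using assms by (rule k_separation_iff_conn_less)
  then show ?thesis
    unfolding k_connected_def by (auto simp: not_less)
qed

theorem mainTheorem4:
  fixes C :: "'c set" and cdim :: "'c \<Rightarrow> nat" and inc :: "'c \<Rightarrow> 'c \<Rightarrow> 'f::field"
    and n k :: nat
  assumes "regular_cw C cdim inc n" and "1 \<le> n"
  shows "k_connected (mrank inc) (ncells C cdim n) k \<longleftrightarrow>
    (\<forall>l. 1 \<le> l \<and> l < k \<longrightarrow>
       (\<forall>E1 E2. E1 \<union> E2 = ncells C cdim n \<and> E1 \<inter> E2 = {} \<and> card E1 \<ge> l \<and> card E2 \<ge> l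
          \<longrightarrow> nu C cdim inc (n - 1) E1 E2 \<ge> l))"
proof -
  interpret augmented_cell_complex C cdim inc
    using assms(1) by (rule regular_cw_imp_augmented_cell_complex)
  obtain m where n: "n = Suc m"
    using assms(2) by (cases n) auto
  show ?thesis
    unfolding n diff_Suc_1 by (rule k_connected_iff_conn_ge) (rule mrank_add_mrank_eq)
qed

end
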